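(* A numerical semigroup $S$ has a cyclotomic exponent sequence with only finitely many nonzero terms if and only if $S$ is a cyclotomic numerical semigroup.
   Context: A numerical semigroup is a submonoid $S$ of $(\mathbb N,+)$ with $\mathbb N\setminus S$ finite; $\mathrm P_S(x)=(1-x)\sum_{s\in S}x^s$ is its semigroup polynomial (a polynomial with constant term $1$). There are unique integers $e_1,e_2,\ldots$ such that $\mathrm P_S(x)=\prod_{j=1}^\infty(1-x^j)^{e_j}$ as formal power series; the sequence $(e_1,e_2,\ldots)$ is the cyclotomic exponent sequence of $S$. $S$ is cyclotomic if $\mathrm P_S$ has all complex roots in the closed unit disc. *)

theory Defs
  imports "HOL-Analysis.Analysis" "HOL-Computational_Algebra.Polynomial_FPS"
begin

definition numerical_semigroup :: "nat set \<Rightarrow> bool" where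
  "numerical_semigroup S \<longleftrightarrow> 0 \<in> S \<and> (\<forall>a\<in>S. \<forall>b\<in>S. a + b \<in> S) \<and> finite (UNIV - S)"

definition semigroup_fps :: "nat set \<Rightarrow> complex fps" where
  "semigroup_fps S = (1 - fps_X) * Abs_fps (\<lambda>n. if n \<in> S then 1 else 0)"

definition semigroup_poly :: "nat set \<Rightarrow> complex poly" where
  "semigroup_poly S = (THE p. fps_of_poly p = semigroup_fps S)"

text \<open>e is the cyclotomic exponent sequence (indexed from 1; e 0 is irrelevant):
  P_S = prod_{j>=1} (1 - x^j)^(e j) as formal power series, i.e. coefficientwise,
  where the coefficient of x^n only depends on the factors with j <= n.\<close>
definition cyclotomic_exponent_seq :: "nat set \<Rightarrow> (nat \<Rightarrow> int) \<Rightarrow> bool" where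
  "cyclotomic_exponent_seq S e \<longleftrightarrow>
     (\<forall>n. fps_nth (semigroup_fps S) n =
          fps_nth (\<Prod>j\<in>{1..n}. (1 - fps_X ^ j) powi (e j)) n)"

definition cyclotomic_numerical_semigroup :: "nat set \<Rightarrow> bool" where
  "cyclotomic_numerical_semigroup S \<longleftrightarrow> numerical_semigroup S \<and>
     (\<forall>z::complex. poly (semigroup_poly S) z = 0 \<longrightarrow> cmod z \<le> 1)"

end

theory Submission
  imports Defs "HOL-Computational_Algebra.Primes" "HOL-Computational_Algebra.Fundamental_Theorem_Algebra"
begin

text \<open>
  If only finitely many exponents are nonzero, clearing denominators gives \<open>P\<^sub>S B = A\<close> with
  \<open>A\<close> and \<open>B\<close> products of polynomials \<open>1 - x\<^sup>j\<close>, so every root of \<open>P\<^sub>S\<close> is a root of unity.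
  Conversely, compare the logarithmic derivatives \<open>x P\<^sub>S'/P\<^sub>S\<close> of both sides: the coefficient of
  \<open>x\<^sup>n\<close> is \<open>-\<Sum>\<^sub>d\<^sub>|\<^sub>n d e\<^sub>d\<close> on the product side and \<open>-\<Sum>\<^sub>i r\<^sub>i\<^sup>-\<^sup>n\<close> over the roots \<open>r\<^sub>i\<close>
  of \<open>P\<^sub>S\<close>. As \<open>P\<^sub>S(0) = 1\<close> and the leading coefficient of \<open>P\<^sub>S\<close> has modulus 1, roots in the
  closed unit disc lie on the unit circle, so these divisor sums are bounded by \<open>D = deg P\<^sub>S\<close>.
  Moebius inversion over the prime factors of \<open>n\<close> then gives \<open>n |e\<^sub>n| \<le> 2\<^sup>\<omega>\<^sup>(\<^sup>n\<^sup>) D\<close>, and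
  \<open>2\<^sup>\<omega>\<^sup>(\<^sup>n\<^sup>) \<le> d(n) \<le> 2 \<surd>n\<close> forces \<open>e\<^sub>n = 0\<close> for \<open>n > 4 D\<^sup>2\<close>.
\<close>

text \<open>HOL-Analysis uses \<open>$\<close> for vector components; here it denotes power series coefficients.\<close>
unbundle no vec_syntax
notation fps_nth (infixl "$" 75)

section \<open>Logarithmic derivatives of formal power series\<close>

lemma fps_prod_nth_0:
  "finite J \<Longrightarrow> (\<Prod>j\<in>J. F j) $ 0 = (\<Prod>j\<in>J. (F j :: 'a::comm_semiring_1 fps) $ 0)"
  by (induction J rule: finite_induct) auto

definition fps_log_deriv :: "'a::field fps \<Rightarrow> 'a fps" where
  "fps_log_deriv A = fps_X * fps_deriv A * inverse A"

lemma fps_log_deriv_eqI: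
  fixes A G :: "'a::field fps"
  assumes "A $ 0 \<noteq> 0" "G * A = fps_X * fps_deriv A"
  shows "fps_log_deriv A = G"
proof -
  have "fps_log_deriv A = G * (A * inverse A)"
    unfolding fps_log_deriv_def assms(2)[symmetric] by (simp add: mult.assoc)
  then show ?thesis using inverse_mult_eq_1'[OF assms(1)] by simp
qed

lemma fps_log_deriv_mult_self:
  fixes A :: "'a::field fps"
  assumes "A $ 0 \<noteq> 0"
  shows "fps_log_deriv A * A = fps_X * fps_deriv A"
  using inverse_mult_eq_1[OF assms] unfolding fps_log_deriv_def by (simp add: mult.assoc)

lemma fps_log_deriv_mult:
  fixes A B :: "'a::field fps"
  assumes "A $ 0 \<noteq> 0" "B $ 0 \<noteq> 0"
  shows "fps_log_deriv (A * B) = fps_log_deriv A + fps_log_deriv B"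
proof (rule fps_log_deriv_eqI)
  show "(A * B) $ 0 \<noteq> 0" using assms by simp
  have "(fps_log_deriv A + fps_log_deriv B) * (A * B) =
        (fps_log_deriv A * A) * B + (fps_log_deriv B * B) * A"
    by (simp add: algebra_simps)
  also have "\<dots> = fps_X * fps_deriv (A * B)"
    using fps_log_deriv_mult_self[OF assms(1)] fps_log_deriv_mult_self[OF assms(2)]
    by (simp add: algebra_simps)
  finally show "(fps_log_deriv A + fps_log_deriv B) * (A * B) = fps_X * fps_deriv (A * B)" .
qed

lemma fps_log_deriv_const [simp]: "fps_log_deriv (fps_const c) = 0"
  by (simp add: fps_log_deriv_def)

lemma fps_log_deriv_one [simp]: "fps_log_deriv 1 = 0"
  by (simp add: fps_log_deriv_def)

lemma fps_log_deriv_inverse: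
  fixes A :: "'a::field fps"
  assumes "A $ 0 \<noteq> 0"
  shows "fps_log_deriv (inverse A) = - fps_log_deriv A"
proof (rule fps_log_deriv_eqI)
  show "inverse A $ 0 \<noteq> 0" using assms by simp
  show "- fps_log_deriv A * inverse A = fps_X * fps_deriv (inverse A)"
    using fps_inverse_deriv[OF assms]
    by (simp add: fps_log_deriv_def power2_eq_square ac_simps)
qed

lemma fps_log_deriv_power:
  fixes A :: "'a::field fps"
  assumes "A $ 0 \<noteq> 0"
  shows "fps_log_deriv (A ^ n) = of_nat n * fps_log_deriv A"
proof (induction n)
  case (Suc n)
  have "(A ^ n) $ 0 \<noteq> 0" using assms by (simp add: fps_nth_power_0)
  then show ?case using Suc assms by (simp add: fps_log_deriv_mult algebra_simps)
qed simp

lemma fps_log_deriv_power_int: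
  fixes A :: "'a::field fps"
  assumes "A $ 0 \<noteq> 0"
  shows "fps_log_deriv (A powi k) = of_int k * fps_log_deriv A"
proof (cases "k \<ge> 0")
  case True
  then show ?thesis using fps_log_deriv_power[OF assms, of "nat k"] by (simp add: power_int_def)
next
  case False
  then show ?thesis
    using fps_log_deriv_power[of "inverse A" "nat (- k)"] assms
    by (simp add: power_int_def fps_log_deriv_inverse)
qed

lemma fps_power_int_nth_0: "(A powi k) $ 0 = (A $ 0 :: 'a::field) powi k"
  by (simp add: power_int_def fps_nth_power_0)

lemma fps_log_deriv_prod:
  fixes F :: "'b \<Rightarrow> 'a::field fps"
  assumes "finite J" "\<And>j. j \<in> J \<Longrightarrow> F j $ 0 \<noteq> 0"
  shows "fps_log_deriv (\<Prod>j\<in>J. F j) = (\<Sum>j\<in>J. fps_log_deriv (F j))"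
  using assms
proof (induction J rule: finite_induct)
  case (insert x J)
  then show ?case by (simp add: fps_log_deriv_mult fps_prod_nth_0)
qed simp

lemma fps_log_deriv_linear:
  fixes a :: "'a::field"
  assumes "a \<noteq> 0"
  shows "fps_log_deriv (fps_of_poly [:- a, 1:]) =
           Abs_fps (\<lambda>n. if n = 0 then 0 else - (inverse a ^ n))"
    (is "_ = ?G")
proof (rule fps_log_deriv_eqI)
  have lin: "fps_of_poly [:- a, 1:] = fps_X - fps_const a"
    by (simp add: fps_of_poly_linear)
  show "fps_of_poly [:- a, 1:] $ 0 \<noteq> 0" using assms by simp
  show "?G * fps_of_poly [:- a, 1:] = fps_X * fps_deriv (fps_of_poly [:- a, 1:])"
    unfolding lin
  proof (rule fps_ext)
    fix n
    have "(?G * (fps_X - fps_const a)) $ n = (fps_X * ?G) $ n - a * ?G $ n"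
      by (simp add: algebra_simps)
    also have "\<dots> = (if n = 1 then 1 else 0)"
      using assms by (cases n) (auto simp: field_simps)
    also have "\<dots> = (fps_X * fps_deriv (fps_X - fps_const a)) $ n"
      by (cases n) (simp_all add: fps_mult_fps_X_deriv_shift)
    finally show "(?G * (fps_X - fps_const a)) $ n = (fps_X * fps_deriv (fps_X - fps_const a)) $ n" .
  qed
qed

lemma fps_log_deriv_one_minus_X_power:
  assumes "j > 0"
  shows "fps_log_deriv (1 - fps_X ^ j :: 'a::field fps) =
           Abs_fps (\<lambda>n. if n > 0 \<and> j dvd n then - of_nat j else 0)"
    (is "_ = ?G")
proof (rule fps_log_deriv_eqI)
  show "(1 - fps_X ^ j :: 'a fps) $ 0 \<noteq> 0" using assms by simp
  show "?G * (1 - fps_X ^ j) = fps_X * fps_deriv (1 - fps_X ^ j)"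
  proof (rule fps_ext)
    fix n
    have "(?G * (1 - fps_X ^ j)) $ n = ?G $ n - (if n < j then 0 else ?G $ (n - j))"
      by (simp add: algebra_simps fps_X_power_mult_nth)
    also have "\<dots> = (if n = j then - of_nat j else 0)"
    proof -
      consider "n < j" | "n = j" | "n > j" by linarith
      then show ?thesis
      proof cases
        case 1
        then show ?thesis using assms by (auto dest: dvd_imp_le)
      next
        case 3
        then have "j dvd n \<longleftrightarrow> j dvd (n - j)" by (simp add: dvd_minus_self)
        then show ?thesis using 3 by auto
      qed (use assms in auto)
    qed
    also have "\<dots> = (fps_X * fps_deriv (1 - fps_X ^ j)) $ n"
      by (simp add: fps_mult_fps_X_deriv_shift fps_X_power_iff)
    finally show "(?G * (1 - fps_X ^ j)) $ n = (fps_X * fps_deriv (1 - fps_X ^ j)) $ n" .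
  qed
qed

lemma fps_log_deriv_split_poly_nth:
  fixes r :: "nat \<Rightarrow> 'a::field"
  assumes "c \<noteq> 0" "\<And>i. i < m \<Longrightarrow> r i \<noteq> 0"
  shows "fps_log_deriv (fps_of_poly (smult c (\<Prod>i<m. [:- r i, 1:]))) $ n =
           (if n = 0 then 0 else - (\<Sum>i<m. inverse (r i) ^ n))"
proof -
  have nonzero: "fps_of_poly [:- r i, 1:] $ 0 \<noteq> 0" if "i < m" for i
    using assms(2)[OF that] by simp
  have "fps_log_deriv (fps_of_poly (smult c (\<Prod>i<m. [:- r i, 1:]))) =
        fps_log_deriv (fps_const c * (\<Prod>i<m. fps_of_poly [:- r i, 1:]))"
    by (simp add: fps_of_poly_smult fps_of_poly_prod)
  also have "\<dots> = fps_log_deriv (\<Prod>i<m. fps_of_poly [:- r i, 1:])"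
    using assms(1) nonzero by (simp add: fps_log_deriv_mult fps_prod_nth_0)
  also have "\<dots> = (\<Sum>i<m. fps_log_deriv (fps_of_poly [:- r i, 1:]))"
    by (rule fps_log_deriv_prod) (use nonzero in auto)
  also have "\<dots> = (\<Sum>i<m. Abs_fps (\<lambda>n. if n = 0 then 0 else - (inverse (r i) ^ n)))"
    using assms(2) by (simp add: fps_log_deriv_linear)
  finally show ?thesis by (simp add: fps_sum_nth sum_negf)
qed

section \<open>Agreement of power series up to a given order\<close>

lemma fps_cutoff_mult_cong:
  fixes A B C D :: "'a::comm_semiring_1 fps"
  assumes "fps_cutoff n A = fps_cutoff n B" "fps_cutoff n C = fps_cutoff n D"
  shows "fps_cutoff n (A * C) = fps_cutoff n (B * D)"
  unfolding fps_cutoff_eq_fps_cutoff_iff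
proof (intro allI impI)
  fix k assume "k < n"
  with assms show "(A * C) $ k = (B * D) $ k"
    unfolding fps_cutoff_eq_fps_cutoff_iff fps_mult_nth by (intro sum.cong) auto
qed

lemma fps_cutoff_power_cong:
  fixes A B :: "'a::comm_semiring_1 fps"
  assumes "fps_cutoff n A = fps_cutoff n B"
  shows "fps_cutoff n (A ^ k) = fps_cutoff n (B ^ k)"
proof (induction k)
  case (Suc k)
  then show ?case using fps_cutoff_mult_cong[OF assms] by simp
qed simp

lemma fps_cutoff_inverse_cong:
  fixes A B :: "'a::field fps"
  assumes "fps_cutoff n A = fps_cutoff n B"
  shows "fps_cutoff n (inverse A) = fps_cutoff n (inverse B)"
proof (cases "n = 0")
  case False
  then have A0_B0: "A $ 0 = B $ 0"
    using assms by (simp add: fps_cutoff_eq_fps_cutoff_iff)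
  show ?thesis
  proof (cases "A $ 0 = 0")
    case False
    then show ?thesis
      using A0_B0 assms fps_cutoff_inverse by metis
  next
    case True
    \<comment> \<open>the library's \<open>inverse\<close> sends series with vanishing constant term to \<open>0\<close>\<close>
    then have "inverse A = 0" "inverse B = 0"
      using A0_B0 by simp_all
    then show ?thesis by (simp del: fps_inverse_eq_0_iff)
  qed
qed simp

lemma fps_cutoff_power_int_cong:
  fixes A B :: "'a::field fps"
  assumes "fps_cutoff n A = fps_cutoff n B"
  shows "fps_cutoff n (A powi k) = fps_cutoff n (B powi k)"
  unfolding power_int_def
  using fps_cutoff_power_cong[OF assms] fps_cutoff_power_cong[OF fps_cutoff_inverse_cong[OF assms]]
  by simp

lemma fps_cutoff_prod_cong:
  fixes F G :: "'b \<Rightarrow> 'a::comm_semiring_1 fps"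
  shows "finite J \<Longrightarrow> (\<And>j. j \<in> J \<Longrightarrow> fps_cutoff n (F j) = fps_cutoff n (G j)) \<Longrightarrow>
    fps_cutoff n (\<Prod>j\<in>J. F j) = fps_cutoff n (\<Prod>j\<in>J. G j)"
proof (induction J rule: finite_induct)
  case (insert x J)
  then show ?case using fps_cutoff_mult_cong[of n "F x" "G x"] by simp
qed simp

lemma fps_cutoff_log_deriv_cong:
  fixes A B :: "'a::field fps"
  assumes "fps_cutoff n A = fps_cutoff n B"
  shows "fps_cutoff n (fps_log_deriv A) = fps_cutoff n (fps_log_deriv B)"
proof -
  have "fps_cutoff n (fps_X * fps_deriv A) = fps_cutoff n (fps_X * fps_deriv B)"
    using assms by (simp add: fps_mult_fps_X_deriv_shift fps_cutoff_eq_fps_cutoff_iff)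
  then show ?thesis
    unfolding fps_log_deriv_def
    by (rule fps_cutoff_mult_cong[OF _ fps_cutoff_inverse_cong[OF assms]])
qed

definition cyclotomic_partial_product :: "(nat \<Rightarrow> int) \<Rightarrow> nat \<Rightarrow> 'a::field fps" where
  "cyclotomic_partial_product e N = (\<Prod>j\<in>{1..N}. (1 - fps_X ^ j) powi e j)"

lemma cyclotomic_partial_product_cutoff:
  assumes "k \<le> N"
  shows "fps_cutoff (Suc k) (cyclotomic_partial_product e N :: 'a::field fps) =
         fps_cutoff (Suc k) (cyclotomic_partial_product e k)"
proof -
  have factor: "fps_cutoff (Suc k) ((1 - fps_X ^ j) powi e j :: 'a fps) = fps_cutoff (Suc k) 1"
    if "j > k" for j
  proof -
    have "fps_cutoff (Suc k) (1 - fps_X ^ j :: 'a fps) = fps_cutoff (Suc k) 1"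
      using that by (auto simp: fps_cutoff_eq_fps_cutoff_iff fps_X_power_iff)
    then show ?thesis
      using fps_cutoff_power_int_cong[of "Suc k" "1 - fps_X ^ j :: 'a fps" 1 "e j"]
      by (simp add: power_int_def)
  qed
  have "fps_cutoff (Suc k) (\<Prod>j\<in>{Suc k..N}. (1 - fps_X ^ j) powi e j :: 'a fps) =
        fps_cutoff (Suc k) (\<Prod>j\<in>{Suc k..N}. 1)"
    by (rule fps_cutoff_prod_cong) (simp_all add: factor)
  then have tail: "fps_cutoff (Suc k) (\<Prod>j\<in>{Suc k..N}. (1 - fps_X ^ j) powi e j :: 'a fps) =
                   fps_cutoff (Suc k) 1"
    by simp
  have "cyclotomic_partial_product e N =
        cyclotomic_partial_product e k * (\<Prod>j\<in>{Suc k..N}. (1 - fps_X ^ j) powi e j :: 'a fps)"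
    unfolding cyclotomic_partial_product_def using assms
    by (subst prod.union_disjoint[symmetric]) (auto intro!: prod.cong)
  then show ?thesis
    using fps_cutoff_mult_cong[OF refl tail] by simp
qed

lemma cyclotomic_exponent_seq_cutoff:
  assumes "cyclotomic_exponent_seq S e"
  shows "fps_cutoff (Suc N) (semigroup_fps S) = fps_cutoff (Suc N) (cyclotomic_partial_product e N)"
  unfolding fps_cutoff_eq_fps_cutoff_iff
proof (intro allI impI)
  fix k assume "k < Suc N"
  then have "cyclotomic_partial_product e N $ k = cyclotomic_partial_product e k $ k"
    using cyclotomic_partial_product_cutoff[of k N e]
    by (auto simp: fps_cutoff_eq_fps_cutoff_iff)
  then show "semigroup_fps S $ k = cyclotomic_partial_product e N $ k"
    using assms unfolding cyclotomic_exponent_seq_def cyclotomic_partial_product_def by metis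
qed

lemma fps_log_deriv_cyclotomic_partial_product_nth:
  assumes "n > 0"
  shows "fps_log_deriv (cyclotomic_partial_product e n :: 'a::field fps) $ n =
           - of_int (\<Sum>d | d dvd n. int d * e d)"
proof -
  have divisors: "{d. d dvd n} = {j\<in>{1..n}. j dvd n}"
    using assms by (auto dest: dvd_imp_le intro: Nat.gr0I)
  have "fps_log_deriv (cyclotomic_partial_product e n :: 'a fps) =
        (\<Sum>j\<in>{1..n}. of_int (e j) * fps_log_deriv (1 - fps_X ^ j))"
    unfolding cyclotomic_partial_product_def
    by (subst fps_log_deriv_prod) (auto simp: fps_log_deriv_power_int fps_power_int_nth_0)
  then have "fps_log_deriv (cyclotomic_partial_product e n :: 'a fps) $ n =
             (\<Sum>j\<in>{1..n}. of_int (e j) * (if j dvd n then - of_nat j else 0))"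
    using assms by (simp add: fps_sum_nth fps_log_deriv_one_minus_X_power)
  also have "\<dots> = (\<Sum>j\<in>{j\<in>{1..n}. j dvd n}. - (of_int (e j) * of_nat j))"
    by (simp add: sum.inter_filter[symmetric] if_distrib cong: if_cong)
  finally show ?thesis
    unfolding divisors by (simp add: sum_negf algebra_simps)
qed

section \<open>Bounded divisor sums\<close>

lemma prime_dvd_div_prime:
  fixes n p q :: nat
  assumes "prime p" "prime q" "p \<noteq> q" "p dvd n" "q dvd n"
  shows "q dvd n div p"
proof -
  have "\<not> q dvd p" using assms primes_dvd_imp_eq by blast
  moreover have "q dvd p * (n div p)" using assms by simp
  ultimately show ?thesis using assms(2) prime_dvd_mult_iff by blast
qed

lemma dvd_div_div_primes:
  fixes n d p q :: nat
  assumes "prime p" "prime q" "p \<noteq> q" "p dvd n" "q dvd n" "d dvd n div p" "d dvd n div q"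
  shows "d dvd n div p div q"
proof -
  have "coprime p q" using assms by (simp add: primes_coprime)
  then have "p * q dvd n" using assms by (simp add: divides_mult)
  then obtain r where n: "n = p * q * r" by blast
  have "p > 0" "q > 0" using assms prime_gt_0_nat by auto
  then have "n div p = q * r" "n div q = p * r" "n div p div q = r" using n by auto
  then have "d dvd gcd (r * q) (r * p)" using assms by (simp add: mult.commute)
  also have "gcd (r * q) (r * p) = r"
    using \<open>coprime p q\<close> gcd_mult_distrib_nat[of r q p]
    by (simp add: coprime_commute coprime_iff_gcd_eq_1)
  finally show ?thesis using \<open>n div p div q = r\<close> by simp
qed

text \<open>
  Inclusion-exclusion over the prime factors \<open>Q\<close> of \<open>n\<close> (Moebius inversion): adding a prime \<open>p\<close>
  to \<open>Q\<close> removes the divisors of \<open>n div p\<close>, each step at most doubling the bound, and once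
  \<open>Q\<close> contains all prime factors only \<open>n\<close> itself is left.
\<close>
definition divisors_avoiding :: "nat \<Rightarrow> nat set \<Rightarrow> nat set" where
  "divisors_avoiding n Q = {d. d dvd n \<and> (\<forall>q\<in>Q. \<not> d dvd n div q)}"

lemma divisors_avoiding_insert:
  assumes "n > 0" "prime p" "p dvd n" "p \<notin> Q" and Q: "\<forall>q\<in>Q. prime q \<and> q dvd n"
  shows "divisors_avoiding (n div p) Q \<subseteq> divisors_avoiding n Q"
    and "divisors_avoiding n (insert p Q) = divisors_avoiding n Q - divisors_avoiding (n div p) Q"
proof -
  have n: "n = p * (n div p)" using assms by simp
  have iff: "d \<in> divisors_avoiding (n div p) Q \<longleftrightarrow> d \<in> divisors_avoiding n Q \<and> d dvd n div p" for d
  proof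
    assume d: "d \<in> divisors_avoiding (n div p) Q"
    have "\<not> d dvd n div q" if "q \<in> Q" for q
    proof
      assume "d dvd n div q"
      moreover have "p \<noteq> q" "prime q" "q dvd n" using assms(4) Q that by auto
      ultimately have "d dvd n div p div q"
        using dvd_div_div_primes[of p q n d] assms(2,3) d by (simp add: divisors_avoiding_def)
      then show False using d that by (auto simp: divisors_avoiding_def)
    qed
    moreover have "d dvd n"
      using d n dvd_mult[of d "n div p" p] by (simp add: divisors_avoiding_def)
    ultimately show "d \<in> divisors_avoiding n Q \<and> d dvd n div p"
      using d by (simp add: divisors_avoiding_def)
  next
    assume d: "d \<in> divisors_avoiding n Q \<and> d dvd n div p"
    have "\<not> d dvd n div p div q" if "q \<in> Q" for q
    proof
      assume dm: "d dvd n div p div q"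
      have "p \<noteq> q" using assms(4) that by blast
      then have "q dvd n div p" using prime_dvd_div_prime[OF assms(2) _ _ assms(3)] Q that by blast
      then obtain m where m: "n div p = q * m" by blast
      have "q > 0" using Q that prime_gt_0_nat by blast
      have "n = q * (p * m)" using n m by simp
      then have "n div q = p * m" "n div p div q = m"
        using \<open>q > 0\<close> m by simp_all
      then have "d dvd n div q" using dm by simp
      then show False using d that by (auto simp: divisors_avoiding_def)
    qed
    then show "d \<in> divisors_avoiding (n div p) Q" using d by (auto simp: divisors_avoiding_def)
  qed
  show "divisors_avoiding (n div p) Q \<subseteq> divisors_avoiding n Q" using iff by auto
  show "divisors_avoiding n (insert p Q) = divisors_avoiding n Q - divisors_avoiding (n div p) Q"
    using iff by (auto simp: divisors_avoiding_def)
qed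

lemma sum_divisors_avoiding_bound:
  fixes f :: "nat \<Rightarrow> int"
  assumes bounded: "\<And>n. n > 0 \<Longrightarrow> \<bar>\<Sum>d | d dvd n. f d\<bar> \<le> D"
  shows "finite Q \<Longrightarrow> n > 0 \<Longrightarrow> \<forall>q\<in>Q. prime q \<and> q dvd n \<Longrightarrow>
    \<bar>\<Sum>d\<in>divisors_avoiding n Q. f d\<bar> \<le> 2 ^ card Q * D"
proof (induction Q arbitrary: n rule: finite_induct)
  case empty
  then show ?case using bounded by (simp add: divisors_avoiding_def)
next
  case (insert p Q)
  have p: "prime p" "p dvd n" and Q: "\<forall>q\<in>Q. prime q \<and> q dvd n" using insert.prems by auto
  have "p \<le> n" using p insert.prems(1) by (simp add: dvd_imp_le)
  then have "n div p > 0" using prime_gt_0_nat[OF p(1)] by (simp add: div_greater_zero_iff)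
  moreover have "\<forall>q\<in>Q. prime q \<and> q dvd n div p"
    using insert.hyps(2) p Q prime_dvd_div_prime by metis
  ultimately have bound_div: "\<bar>\<Sum>d\<in>divisors_avoiding (n div p) Q. f d\<bar> \<le> 2 ^ card Q * D"
    by (rule insert.IH)
  have bound: "\<bar>\<Sum>d\<in>divisors_avoiding n Q. f d\<bar> \<le> 2 ^ card Q * D"
    using insert.IH insert.prems(1) Q .
  note split = divisors_avoiding_insert[OF insert.prems(1) p insert.hyps(2) Q]
  have "finite (divisors_avoiding n Q)"
    using insert.prems(1) by (simp add: divisors_avoiding_def)
  then have "(\<Sum>d\<in>divisors_avoiding n (insert p Q). f d) =
             (\<Sum>d\<in>divisors_avoiding n Q. f d) - (\<Sum>d\<in>divisors_avoiding (n div p) Q. f d)"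
    unfolding split(2) using split(1) by (rule sum_diff)
  then show ?case using bound bound_div insert.hyps by simp
qed

lemma divisors_avoiding_prime_factors:
  assumes "n > 0"
  shows "divisors_avoiding n (prime_factors n) = {n}"
proof -
  have "\<not> n dvd n div q" if "q \<in> prime_factors n" for q
  proof
    assume "n dvd n div q"
    have q: "prime q" "q dvd n" using that by auto
    then have "q \<le> n" using assms by (simp add: dvd_imp_le)
    then have "n div q < n" "n div q > 0"
      using q prime_gt_1_nat[of q] assms by (simp_all add: div_greater_zero_iff)
    then show False using \<open>n dvd n div q\<close> dvd_imp_le by fastforce
  qed
  moreover have "d = n" if d: "d \<in> divisors_avoiding n (prime_factors n)" for d
  proof (rule ccontr)
    assume "d \<noteq> n"
    from d obtain k where k: "n = d * k" by (auto simp: divisors_avoiding_def)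
    with \<open>d \<noteq> n\<close> have "k \<noteq> 1" by auto
    then obtain q where q: "prime q" "q dvd k" using prime_factor_nat by blast
    then have "q \<in> prime_factors n" "d dvd n div q"
      using k assms by (auto simp: in_prime_factors_iff)
    then show False using d by (auto simp: divisors_avoiding_def)
  qed
  ultimately show ?thesis by (auto simp: divisors_avoiding_def)
qed

lemma abs_le_of_bounded_divisor_sums:
  fixes f :: "nat \<Rightarrow> int"
  assumes "\<And>n. n > 0 \<Longrightarrow> \<bar>\<Sum>d | d dvd n. f d\<bar> \<le> D" "n > 0"
  shows "\<bar>f n\<bar> \<le> 2 ^ card (prime_factors n) * D"
proof -
  have "\<forall>q\<in>prime_factors n. prime q \<and> q dvd n" by auto
  then show ?thesis
    using sum_divisors_avoiding_bound[OF assms(1) _ assms(2), of "prime_factors n"] assms(2)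
    by (simp add: divisors_avoiding_prime_factors)
qed

lemma prod_prime_factors_dvd:
  fixes n :: nat
  assumes "n > 0"
  shows "\<Prod>(prime_factors n) dvd n"
proof -
  have "\<Prod>(prime_factors n) = prod_mset (mset_set (prime_factors n))"
    by (simp add: prod_unfold_prod_mset)
  also have "\<dots> dvd prod_mset (prime_factorization n)"
    by (rule prod_mset_subset_imp_dvd[OF mset_set_set_mset_msubset])
  also have "\<dots> = n" using assms by simp
  finally show ?thesis .
qed

lemma two_power_card_prime_factors_le:
  fixes n :: nat
  assumes "n > 0"
  shows "2 ^ card (prime_factors n) \<le> card {d. d dvd n}"
proof -
  have inj: "inj_on Prod (Pow (prime_factors n))"
  proof (rule inj_onI)
    fix A B assume A: "A \<in> Pow (prime_factors n)" and B: "B \<in> Pow (prime_factors n)"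
      and eq: "\<Prod>A = \<Prod>B"
    have "prime_factors (\<Prod>C) = C" if "C \<in> Pow (prime_factors n)" for C
    proof -
      have "finite C" "\<forall>p\<in>C. prime p" using that finite_subset[of C "prime_factors n"] by auto
      then show ?thesis by (subst prime_factors_prod) (auto simp: prime_factorization_prime)
    qed
    then show "A = B" using A B eq by metis
  qed
  have "Prod ` Pow (prime_factors n) \<subseteq> {d. d dvd n}"
    using prod_dvd_prod_subset[of "prime_factors n" _ id] prod_prime_factors_dvd[OF assms]
    by (auto intro: dvd_trans)
  then have "card (Pow (prime_factors n)) \<le> card {d. d dvd n}"
    using card_inj_on_le[OF inj] assms by simp
  then show ?thesis by (simp add: card_Pow)
qed

lemma card_divisors_squared_le:
  fixes n :: nat
  assumes "n > 0"
  shows "(card {d. d dvd n})\<^sup>2 \<le> 4 * n"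
proof -
  define L where "L = {d. d dvd n \<and> d * d \<le> n}"
  define U where "U = {d. d dvd n \<and> n < d * d}"
  have fin: "finite L" "finite U"
    using assms by (auto simp: L_def U_def intro: finite_subset[OF _ finite_divisors_nat])
  have "{d. d dvd n} = L \<union> U" "L \<inter> U = {}" by (auto simp: L_def U_def)
  then have card_split: "card {d. d dvd n} = card L + card U"
    using fin by (simp add: card_Un_disjoint)
  have "U \<subseteq> (\<lambda>k. n div k) ` L"
  proof
    fix d assume "d \<in> U"
    then obtain k where k: "n = d * k" and large: "d * k < d * d" by (auto simp: U_def)
    then have "k < d" by simp
    then have "k * k \<le> n" using k by (simp add: mult_le_mono1)
    moreover have "k > 0" using k assms by (simp add: gr0I)
    ultimately show "d \<in> (\<lambda>k. n div k) ` L"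
      using k by (auto simp: L_def intro!: image_eqI[of d _ k])
  qed
  then have "card U \<le> card L"
    using fin by (meson card_image_le card_mono finite_imageI order_trans)
  have "card L * card L \<le> n"
  proof -
    have "1 \<in> L" using assms by (simp add: L_def)
    then have m: "Max L \<in> L" using fin(1) by (auto intro: Max_in)
    have "L \<subseteq> {1..Max L}"
      using fin(1) assms by (auto simp: L_def intro!: Max_ge gr0I)
    then have "card L \<le> Max L" using card_mono[of "{1..Max L}" L] by simp
    then have "card L * card L \<le> Max L * Max L" by (simp add: mult_le_mono)
    also have "\<dots> \<le> n" using m by (simp add: L_def)
    finally show ?thesis .
  qed
  have "card {d. d dvd n} \<le> 2 * card L"
    using card_split \<open>card U \<le> card L\<close> by simp
  then have "(card {d. d dvd n})\<^sup>2 \<le> (2 * card L)\<^sup>2" by (rule power_mono) simp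
  also have "\<dots> = 4 * (card L * card L)" by (simp add: power2_eq_square)
  also have "\<dots> \<le> 4 * n" using \<open>card L * card L \<le> n\<close> by simp
  finally show ?thesis .
qed

lemma finite_support_of_bounded_divisor_sums:
  fixes e :: "nat \<Rightarrow> int"
  assumes bounded: "\<And>n. n > 0 \<Longrightarrow> \<bar>\<Sum>d | d dvd n. int d * e d\<bar> \<le> int D"
  shows "finite {j. j \<ge> 1 \<and> e j \<noteq> 0}"
proof (rule finite_subset)
  show "{j. j \<ge> 1 \<and> e j \<noteq> 0} \<subseteq> {..4 * D\<^sup>2}"
  proof
    fix n assume "n \<in> {j. j \<ge> 1 \<and> e j \<noteq> 0}"
    then have n: "n > 0" and "e n \<noteq> 0" by auto
    define c where "c = card {d. d dvd n}"
    have "1 \<le> \<bar>e n\<bar>" using \<open>e n \<noteq> 0\<close> by linarith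
    then have "int n \<le> \<bar>int n * e n\<bar>" by (simp add: abs_mult mult_le_cancel_left1)
    also have "\<dots> \<le> 2 ^ card (prime_factors n) * int D"
      using abs_le_of_bounded_divisor_sums[of "\<lambda>d. int d * e d", OF bounded n] by simp
    also have "\<dots> \<le> int (c * D)"
      using two_power_card_prime_factors_le[OF n] unfolding c_def
      by (metis mult_right_mono of_nat_0_le_iff of_nat_le_iff of_nat_mult of_nat_numeral of_nat_power)
    finally have "n \<le> c * D" by (simp only: of_nat_le_iff)
    then have "n * n \<le> c\<^sup>2 * D\<^sup>2" by (metis mult_le_mono power2_eq_square power_mult_distrib)
    also have "\<dots> \<le> 4 * n * D\<^sup>2"
      using card_divisors_squared_le[OF n] unfolding c_def by simp
    finally have "n \<le> 4 * D\<^sup>2" using n by (simp add: mult.assoc)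
    then show "n \<in> {..4 * D\<^sup>2}" by simp
  qed
qed simp

lemma semigroup_fps_nth:
  "semigroup_fps S $ n = (if n \<in> S then 1 else 0) - (if n > 0 \<and> n - 1 \<in> S then 1 else 0)"
  unfolding semigroup_fps_def by (simp add: algebra_simps)

lemma fps_of_semigroup_poly:
  assumes "numerical_semigroup S"
  shows "fps_of_poly (semigroup_poly S) = semigroup_fps S"
proof -
  have "finite (UNIV - S)" using assms by (simp add: numerical_semigroup_def)
  then obtain c where "\<forall>n\<in>UNIV - S. n \<le> c" using finite_nat_set_iff_bounded_le by blast
  then have c: "n \<in> S" if "n > c" for n using that by force
  have "fps_cutoff (c + 2) (semigroup_fps S) = semigroup_fps S"
    by (rule fps_ext) (simp add: semigroup_fps_nth c)
  then have "fps_of_poly (truncate_fps (c + 2) (semigroup_fps S)) = semigroup_fps S" by simp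
  then have "\<exists>!p. fps_of_poly p = semigroup_fps S" using fps_of_poly_eq_iff by metis
  then show ?thesis unfolding semigroup_poly_def by (rule theI')
qed

lemma semigroup_poly_coeff:
  "numerical_semigroup S \<Longrightarrow> coeff (semigroup_poly S) n = semigroup_fps S $ n"
  by (metis fps_of_poly_nth fps_of_semigroup_poly)

lemma semigroup_poly_coeff_0:
  "numerical_semigroup S \<Longrightarrow> coeff (semigroup_poly S) 0 = 1"
  by (simp add: semigroup_poly_coeff semigroup_fps_nth numerical_semigroup_def)

lemma norm_lead_coeff_semigroup_poly:
  assumes "numerical_semigroup S"
  shows "cmod (lead_coeff (semigroup_poly S)) = 1"
proof -
  have "semigroup_poly S \<noteq> 0" using semigroup_poly_coeff_0[OF assms] by auto
  then have "lead_coeff (semigroup_poly S) \<noteq> 0" by simp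
  moreover have "lead_coeff (semigroup_poly S) \<in> {-1, 0, 1}"
    by (simp add: semigroup_poly_coeff[OF assms] semigroup_fps_nth)
  ultimately show ?thesis by auto
qed

section \<open>Roots of the semigroup polynomial\<close>

lemma prod_eq_1_imp_eq_1:
  fixes f :: "'b \<Rightarrow> real"
  assumes "finite A" "\<And>i. i \<in> A \<Longrightarrow> 0 \<le> f i \<and> f i \<le> 1" "prod f A = 1" "k \<in> A"
  shows "f k = 1"
proof (rule ccontr)
  assume "f k \<noteq> 1"
  with assms have "f k < 1" by force
  have "prod f A = f k * prod f (A - {k})" using assms by (simp add: prod.remove)
  also have "\<dots> \<le> f k"
    using assms prod_le_1[of "A - {k}" f] by (simp add: mult_left_le)
  finally show False using \<open>f k < 1\<close> assms(3) by linarith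
qed

lemma roots_on_unit_circle:
  fixes p :: "complex poly"
  assumes coeffs: "cmod (coeff p 0) = cmod (lead_coeff p)" and "p \<noteq> 0"
    and roots_in_disc: "\<And>w. poly p w = 0 \<Longrightarrow> cmod w \<le> 1" and "poly p z = 0"
  shows "cmod z = 1"
proof -
  obtain r where decomp: "smult (lead_coeff p) (\<Prod>i<degree p. [:- r i, 1:]) = p"
    using complex_poly_decompose' by blast
  have poly_p: "poly p w = lead_coeff p * (\<Prod>i<degree p. w - r i)" for w
    by (subst decomp[symmetric]) (simp add: poly_prod)
  have root: "poly p (r i) = 0" if "i < degree p" for i
    unfolding poly_p using that by (auto intro: prod_zero)
  have "cmod (lead_coeff p) * (\<Prod>i<degree p. cmod (r i)) = cmod (lead_coeff p)"
    using coeffs poly_p[of 0] by (simp add: poly_0_coeff_0 norm_mult prod_norm[symmetric])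
  then have "(\<Prod>i<degree p. cmod (r i)) = 1" using \<open>p \<noteq> 0\<close> by simp
  then have unit: "cmod (r i) = 1" if "i < degree p" for i
    using prod_eq_1_imp_eq_1[of "{..<degree p}" "\<lambda>i. cmod (r i)" i] roots_in_disc root that
    by auto
  have "(\<Prod>i<degree p. z - r i) = 0" using \<open>poly p z = 0\<close> \<open>p \<noteq> 0\<close> poly_p by simp
  then obtain i where "i < degree p" "z = r i" by auto
  then show ?thesis using unit by simp
qed

lemma divisor_sums_bounded_if_roots_in_disc:
  assumes S: "numerical_semigroup S" and e: "cyclotomic_exponent_seq S e"
    and roots_in_disc: "\<And>z. poly (semigroup_poly S) z = 0 \<Longrightarrow> cmod z \<le> 1" and "n > 0"
  shows "\<bar>\<Sum>d | d dvd n. int d * e d\<bar> \<le> int (degree (semigroup_poly S))"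
proof -
  define P where "P = semigroup_poly S"
  define m where "m = degree P"
  obtain r where decomp: "smult (lead_coeff P) (\<Prod>i<m. [:- r i, 1:]) = P"
    using complex_poly_decompose' unfolding m_def by blast
  have "P \<noteq> 0" using semigroup_poly_coeff_0[OF S] by (auto simp: P_def)
  have unit: "cmod (r i) = 1" if "i < m" for i
  proof (rule roots_on_unit_circle)
    show "cmod (coeff P 0) = cmod (lead_coeff P)"
      using S by (simp add: P_def semigroup_poly_coeff_0 norm_lead_coeff_semigroup_poly)
    show "poly P (r i) = 0"
      using that by (subst decomp[symmetric]) (auto simp: poly_prod intro: prod_zero)
  qed (use \<open>P \<noteq> 0\<close> roots_in_disc in \<open>auto simp: P_def\<close>)
  have "semigroup_fps S = fps_of_poly (smult (lead_coeff P) (\<Prod>i<m. [:- r i, 1:]))"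
    unfolding decomp by (simp add: P_def fps_of_semigroup_poly[OF S])
  moreover have "r i \<noteq> 0" if "i < m" for i using unit[OF that] by auto
  ultimately have "fps_log_deriv (semigroup_fps S) $ n = - (\<Sum>i<m. inverse (r i) ^ n)"
    using fps_log_deriv_split_poly_nth[of "lead_coeff P" m r n] \<open>n > 0\<close> \<open>P \<noteq> 0\<close> by simp
  moreover have "fps_log_deriv (semigroup_fps S) $ n =
                 fps_log_deriv (cyclotomic_partial_product e n :: complex fps) $ n"
    using fps_cutoff_log_deriv_cong[OF cyclotomic_exponent_seq_cutoff[OF e, of n]]
    by (simp add: fps_cutoff_eq_fps_cutoff_iff)
  ultimately have sum_eq: "of_int (\<Sum>d | d dvd n. int d * e d) = (\<Sum>i<m. inverse (r i) ^ n)"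
    using fps_log_deriv_cyclotomic_partial_product_nth[OF \<open>n > 0\<close>, of e]
    by (metis neg_equal_iff_equal)
  have "real_of_int \<bar>\<Sum>d | d dvd n. int d * e d\<bar> = cmod (\<Sum>i<m. inverse (r i) ^ n)"
    unfolding sum_eq[symmetric] norm_of_int by simp
  also have "\<dots> \<le> (\<Sum>i<m. cmod (inverse (r i) ^ n))" by (rule norm_sum)
  also have "\<dots> = real m" using unit by (simp add: norm_power norm_inverse)
  finally have "real_of_int \<bar>\<Sum>d | d dvd n. int d * e d\<bar> \<le> real_of_int (int m)"
    by (simp only: of_int_of_nat_eq)
  then show ?thesis unfolding m_def P_def by (simp only: of_int_le_iff)
qed

lemma semigroup_fps_eq_cyclotomic_partial_product:
  assumes e: "cyclotomic_exponent_seq S e" and vanish: "\<And>j. j > N \<Longrightarrow> e j = 0"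
  shows "semigroup_fps S = cyclotomic_partial_product e N"
proof (rule fps_ext)
  fix n
  define M where "M = max n N"
  have "cyclotomic_partial_product e M = (cyclotomic_partial_product e N :: complex fps)"
    unfolding cyclotomic_partial_product_def M_def
    by (intro prod.mono_neutral_right) (auto simp: vanish)
  moreover have "semigroup_fps S $ n = cyclotomic_partial_product e M $ n"
    using cyclotomic_exponent_seq_cutoff[OF e, of M]
    by (auto simp: fps_cutoff_eq_fps_cutoff_iff M_def)
  ultimately show "semigroup_fps S $ n = cyclotomic_partial_product e N $ n" by simp
qed

lemma fps_power_int_mult_power_neg:
  fixes A :: "'a::field fps"
  assumes "A $ 0 \<noteq> 0"
  shows "A powi k * A ^ nat (- k) = A ^ nat k"
proof (cases "k \<ge> 0")
  case False
  have "inverse A ^ nat (- k) * A ^ nat (- k) = (inverse A * A) ^ nat (- k)"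
    by (simp add: power_mult_distrib)
  then show ?thesis using False inverse_mult_eq_1[OF assms] by (simp add: power_int_def)
qed (simp add: power_int_def)

lemma roots_of_unity_if_finite_support:
  assumes S: "numerical_semigroup S" and e: "cyclotomic_exponent_seq S e"
    and "finite {j. j \<ge> 1 \<and> e j \<noteq> 0}" and "poly (semigroup_poly S) z = 0"
  shows "\<exists>j>0. z ^ j = 1"
proof -
  obtain N where bound: "\<forall>j\<in>{j. j \<ge> 1 \<and> e j \<noteq> 0}. j \<le> N"
    using assms(3) finite_nat_set_iff_bounded_le by meson
  have vanish: "e j = 0" if "j > N" for j
  proof (rule ccontr)
    assume "e j \<noteq> 0"
    with that bound have "j \<le> N" by simp
    with that show False by simp
  qed
  define A where "A = (\<Prod>j\<in>{1..N}. (1 - monom 1 j) ^ nat (e j) :: complex poly)"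
  define B where "B = (\<Prod>j\<in>{1..N}. (1 - monom 1 j) ^ nat (- e j) :: complex poly)"
  have "fps_of_poly (semigroup_poly S * B) =
        (\<Prod>j\<in>{1..N}. (1 - fps_X ^ j) powi e j * (1 - fps_X ^ j) ^ nat (- e j))"
    by (simp add: fps_of_poly_mult fps_of_semigroup_poly[OF S] B_def fps_of_poly_prod
        fps_of_poly_power fps_of_poly_diff fps_of_poly_monom' prod.distrib
        semigroup_fps_eq_cyclotomic_partial_product[OF e vanish] cyclotomic_partial_product_def)
  also have "\<dots> = fps_of_poly A"
    by (simp add: A_def fps_of_poly_prod fps_of_poly_power fps_of_poly_diff fps_of_poly_monom'
        fps_power_int_mult_power_neg)
  finally have "semigroup_poly S * B = A" by (simp add: fps_of_poly_eq_iff)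
  then have "poly A z = 0"
    using \<open>poly (semigroup_poly S) z = 0\<close> by (metis mult_zero_left poly_mult)
  then have "(\<Prod>j\<in>{1..N}. (1 - z ^ j) ^ nat (e j)) = 0"
    by (simp add: A_def poly_prod poly_monom)
  then obtain j where "j \<in> {1..N}" "z ^ j = 1" by auto
  then show ?thesis by (intro exI[of _ j]) simp
qed

theorem lemma9:
  fixes S :: "nat set" and e :: "nat \<Rightarrow> int"
  assumes "numerical_semigroup S"
    and "cyclotomic_exponent_seq S e"
  shows "finite {j. j \<ge> 1 \<and> e j \<noteq> 0} \<longleftrightarrow> cyclotomic_numerical_semigroup S"
proof
  assume "finite {j. j \<ge> 1 \<and> e j \<noteq> 0}"
  then have "cmod z \<le> 1" if "poly (semigroup_poly S) z = 0" for z
    using roots_of_unity_if_finite_support[OF assms _ that] power_eq_1_iff by fastforce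
  with assms(1) show "cyclotomic_numerical_semigroup S"
    by (simp add: cyclotomic_numerical_semigroup_def)
next
  assume "cyclotomic_numerical_semigroup S"
  then have "\<And>z. poly (semigroup_poly S) z = 0 \<Longrightarrow> cmod z \<le> 1"
    by (simp add: cyclotomic_numerical_semigroup_def)
  then show "finite {j. j \<ge> 1 \<and> e j \<noteq> 0}"
    by (intro finite_support_of_bounded_divisor_sums[of e "degree (semigroup_poly S)"]
        divisor_sums_bounded_if_roots_in_disc[OF assms])
qed

end
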